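(* Let $G$ be a locally soluble group in which every non-abelian subgroup $H$ satisfies $C_G(H)\le H$. If $G$ has a non-abelian finite subgroup contained in $R(G)$, then $G$ is locally finite.
   Context: An element $g\in G$ is a right Engel element if for every $x\in G$ there is a positive integer $n$ with $[g,{}_n x]=1$, where $[g,{}_1x]=[g,x]$ and $[g,{}_{k+1}x]=[[g,{}_kx],x]$. $R(G)$ denotes the set of all right Engel elements of $G$. $C_G(H)$ denotes the centralizer of $H$ in $G$. *)

theory Defs
  imports "HOL-Algebra.Algebra"
begin

definition commutator :: "('a, 'b) monoid_scheme \<Rightarrow> 'a \<Rightarrow> 'a \<Rightarrow> 'a" where
  "commutator G g x = inv\<^bsub>G\<^esub> g \<otimes>\<^bsub>G\<^esub> inv\<^bsub>G\<^esub> x \<otimes>\<^bsub>G\<^esub> g \<otimes>\<^bsub>G\<^esub> x"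

text \<open>Iterated commutator: engel_comm G g x n = [g, n x]; [g, 0 x] = g.\<close>
primrec engel_comm :: "('a, 'b) monoid_scheme \<Rightarrow> 'a \<Rightarrow> 'a \<Rightarrow> nat \<Rightarrow> 'a" where
  "engel_comm G g x 0 = g"
| "engel_comm G g x (Suc n) = commutator G (engel_comm G g x n) x"

definition right_engel_elements :: "('a, 'b) monoid_scheme \<Rightarrow> 'a set" where
  "right_engel_elements G = {g \<in> carrier G. \<forall>x \<in> carrier G. \<exists>n > 0. engel_comm G g x n = \<one>\<^bsub>G\<^esub>}"

definition centralizer :: "('a, 'b) monoid_scheme \<Rightarrow> 'a set \<Rightarrow> 'a set" where
  "centralizer G H = {g \<in> carrier G. \<forall>h \<in> H. g \<otimes>\<^bsub>G\<^esub> h = h \<otimes>\<^bsub>G\<^esub> g}"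

definition abelian_set :: "('a, 'b) monoid_scheme \<Rightarrow> 'a set \<Rightarrow> bool" where
  "abelian_set G H \<longleftrightarrow> (\<forall>x \<in> H. \<forall>y \<in> H. x \<otimes>\<^bsub>G\<^esub> y = y \<otimes>\<^bsub>G\<^esub> x)"

definition locally_soluble :: "('a, 'b) monoid_scheme \<Rightarrow> bool" where
  "locally_soluble G \<longleftrightarrow>
     (\<forall>S. finite S \<and> S \<subseteq> carrier G \<longrightarrow> solvable (subgroup_generated G S))"

definition locally_finite :: "('a, 'b) monoid_scheme \<Rightarrow> bool" where
  "locally_finite G \<longleftrightarrow>
     (\<forall>S. finite S \<and> S \<subseteq> carrier G \<longrightarrow> finite (carrier (subgroup_generated G S)))"

end

theory Submission
  imports Defs
begin

text \<open>
  Let \<open>F\<close> be the finite non-abelian subgroup of right Engel elements, so \<open>C\<^sub>G(F) \<le> F\<close>.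
  For finite \<open>S\<close> the subgroup \<open>H = \<langle>F, S\<rangle>\<close> is soluble, and descending along its
  derived series we show that every element of \<open>H\<close> has finite order; a periodic soluble group
  is locally finite. So let \<open>A\<close> be a term of the series whose derived subgroup \<open>A'\<close> is
  periodic, hence locally finite, and let \<open>a \<in> A\<close>. For \<open>x \<in> F\<close> of order \<open>r\<close>, the Engel
  identity \<open>[x, n (a x)] = 1\<close> read in the abelian group \<open>A/A'\<close>, on which \<open>x\<close> acts by
  conjugation, gives \<open>[x, a\<^sup>m] \<in> A'\<close> whenever \<open>r\<^sup>n\<^sup>-\<^sup>1\<close> divides \<open>m\<close>. Hence some \<open>c = a\<^sup>m\<close>
  satisfies \<open>[y, c] \<in> A'\<close> for all \<open>y \<in> F\<close>, and \<open>F\<close> together with the finitely many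
  non-trivial commutators \<open>[y, k c]\<close> generates a finite subgroup normalised by \<open>c\<close>. A power
  of \<open>c\<close> then centralises \<open>F\<close>, so it lies in the finite group \<open>F\<close>, and \<open>a\<close> has finite order.
\<close>

section \<open>Powers, conjugates and derived subgroups\<close>

lemma finite_range_nat_repeats:
  fixes f :: "nat \<Rightarrow> 'a"
  assumes "finite (range f)"
  obtains i j where "i < j" "f i = f j"
proof -
  have "\<not> inj f"
    using assms finite_imageD infinite_UNIV_nat by blast
  then obtain i j where "i \<noteq> j" "f i = f j"
    unfolding inj_def by blast
  then show thesis
    using that by (metis linorder_neqE_nat)
qed

context group
begin

lemma inv_mult_cancel_left [simp]:
  "x \<in> carrier G \<Longrightarrow> y \<in> carrier G \<Longrightarrow> inv x \<otimes> (x \<otimes> y) = y"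
  by (simp add: m_assoc[symmetric])

lemma mult_inv_cancel_left [simp]:
  "x \<in> carrier G \<Longrightarrow> y \<in> carrier G \<Longrightarrow> x \<otimes> (inv x \<otimes> y) = y"
  by (simp add: m_assoc[symmetric])

lemma subgroup_nat_pow_closed:
  assumes "subgroup H G" "x \<in> H"
  shows "x [^] (n::nat) \<in> H"
  by (induction n) (simp_all add: assms subgroup.one_closed subgroup.m_closed)

lemma ord_ne_0_if_finite_powers:
  assumes "x \<in> carrier G" "finite (range (\<lambda>n::nat. x [^] n))"
  shows "ord x \<noteq> 0"
proof -
  obtain i j :: nat where "i < j" "x [^] j = x [^] i"
    using finite_range_nat_repeats[OF assms(2)] by metis
  then have "x [^] (j - i) = \<one>"
    using pow_eq_div2 assms(1) by blast
  then show ?thesis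
    using \<open>i < j\<close> ord_eq_0[OF assms(1)] by auto
qed

lemma ord_ne_0_in_finite_subgroup:
  assumes "subgroup F G" "finite F" "x \<in> F"
  shows "ord x \<noteq> 0"
proof (rule ord_ne_0_if_finite_powers)
  show "x \<in> carrier G"
    using subgroup.mem_carrier[OF assms(1,3)] .
  have "range (\<lambda>n::nat. x [^] n) \<subseteq> F"
    using subgroup_nat_pow_closed[OF assms(1,3)] by blast
  then show "finite (range (\<lambda>n::nat. x [^] n))"
    using assms(2) finite_subset by blast
qed

lemma ord_ne_0_if_pow:
  assumes "x \<in> carrier G" "0 < k" "ord (x [^] (k::nat)) \<noteq> 0"
  shows "ord x \<noteq> 0"
  using assms ord_pow_gen[of x k] by (cases "ord x") auto

lemma finite_powers_if_ord_ne_0: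
  assumes x: "x \<in> carrier G" and ord: "ord x \<noteq> 0"
  shows "finite (range (\<lambda>n::nat. x [^] n))"
proof -
  have pow_mod: "x [^] n = x [^] (n mod ord x)" for n :: nat
  proof -
    have "x [^] (ord x * (n div ord x)) = \<one>"
      using x by (simp add: pow_eq_id)
    then have "x [^] n = x [^] (n mod ord x) \<otimes> \<one>"
      using x by (metis mod_mult_div_eq nat_pow_mult)
    then show ?thesis
      using x by simp
  qed
  have "range (\<lambda>n::nat. x [^] n) \<subseteq> (\<lambda>n. x [^] n) ` {..<ord x}"
  proof (rule image_subsetI)
    show "x [^] n \<in> (\<lambda>n. x [^] n) ` {..<ord x}" for n :: nat
      using pow_mod[of n] ord by (intro image_eqI[of _ _ "n mod ord x"]) auto
  qed
  then show ?thesis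
    using finite_surj by blast
qed

lemma inv_mem_powers:
  assumes "x \<in> carrier G" "ord x \<noteq> 0"
  shows "inv x \<in> range (\<lambda>n::nat. x [^] n)"
proof -
  have "x [^] (ord x - 1) \<otimes> x = \<one>"
    using assms by (metis Suc_diff_1 nat_pow_Suc neq0_conv pow_ord_eq_1)
  then have "inv x = x [^] (ord x - 1)"
    using assms(1) by (simp add: inv_equality)
  then show ?thesis
    by blast
qed

lemma conj_generate_closed:
  assumes g: "g \<in> carrier G" and Y: "Y \<subseteq> carrier G" and Z: "subgroup Z G"
    and conj_Y: "\<And>y. y \<in> Y \<Longrightarrow> g \<otimes> y \<otimes> inv g \<in> Z"
    and w: "w \<in> generate G Y"
  shows "g \<otimes> w \<otimes> inv g \<in> Z"
  using w
proof (induction rule: generate.induct)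
  case one
  then show ?case
    using g subgroup.one_closed[OF Z] by simp
next
  case (incl h)
  then show ?case
    using conj_Y by blast
next
  case (inv h)
  have "g \<otimes> inv h \<otimes> inv g = inv (g \<otimes> h \<otimes> inv g)"
    using g inv Y by (auto simp add: inv_mult_group m_assoc)
  then show ?case
    using conj_Y[OF inv] subgroup.m_inv_closed[OF Z] by simp
next
  case (eng h1 h2)
  have "h1 \<in> carrier G" "h2 \<in> carrier G"
    using eng(1,2) generate_in_carrier Y by blast+
  then have "g \<otimes> (h1 \<otimes> h2) \<otimes> inv g = (g \<otimes> h1 \<otimes> inv g) \<otimes> (g \<otimes> h2 \<otimes> inv g)"
    using g by (simp add: m_assoc)
  then show ?case
    using subgroup.m_closed[OF Z eng(3) eng(4)] by simp
qed

lemma derived_set_mem_derived: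
  "h1 \<in> K \<Longrightarrow> h2 \<in> K \<Longrightarrow> h1 \<otimes> h2 \<otimes> inv h1 \<otimes> inv h2 \<in> derived G K"
  unfolding derived_def by (rule generate.incl) blast

lemma commutator_in_derived:
  assumes "subgroup K G" "u \<in> K" "v \<in> K"
  shows "commutator G u v \<in> derived G K"
  using derived_set_mem_derived[of "inv u" K "inv v"] assms subgroup.m_inv_closed[OF assms(1)]
    subgroup.mem_carrier[OF assms(1)]
  unfolding commutator_def by simp

lemma derived_conj_closed:
  assumes K: "K \<subseteq> carrier G" and g: "g \<in> carrier G"
    and conj_K: "\<And>k. k \<in> K \<Longrightarrow> g \<otimes> k \<otimes> inv g \<in> K"
    and y: "y \<in> derived G K"
  shows "g \<otimes> y \<otimes> inv g \<in> derived G K"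
proof (rule conj_generate_closed[OF g derived_set_in_carrier[OF K] derived_is_subgroup[OF K]])
  show "y \<in> generate G (derived_set G K)"
    using y unfolding derived_def .
next
  fix z assume "z \<in> derived_set G K"
  then obtain h1 h2 where h: "h1 \<in> K" "h2 \<in> K" "z = h1 \<otimes> h2 \<otimes> inv h1 \<otimes> inv h2"
    by blast
  have "h1 \<in> carrier G" "h2 \<in> carrier G"
    using h K by auto
  then have "g \<otimes> z \<otimes> inv g = (g \<otimes> h1 \<otimes> inv g) \<otimes> (g \<otimes> h2 \<otimes> inv g)
      \<otimes> inv (g \<otimes> h1 \<otimes> inv g) \<otimes> inv (g \<otimes> h2 \<otimes> inv g)"
    unfolding h(3) using g by (simp add: m_assoc inv_mult_group)
  then show "g \<otimes> z \<otimes> inv g \<in> derived G K"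
    using derived_set_mem_derived[OF conj_K[OF h(1)] conj_K[OF h(2)]] by simp
qed

lemma derived_series_subset: "subgroup H G \<Longrightarrow> (derived G ^^ i) H \<subseteq> H"
proof (induction i)
  case (Suc i)
  then show ?case
    using derived_incl[OF Suc.IH[OF Suc.prems] Suc.prems] by simp
qed simp

lemma derived_series_conj_closed:
  assumes H: "subgroup H G" and h: "h \<in> H"
  shows "u \<in> (derived G ^^ i) H \<Longrightarrow> h \<otimes> u \<otimes> inv h \<in> (derived G ^^ i) H"
proof (induction i arbitrary: u)
  case 0
  then show ?case
    using h subgroup.m_closed[OF H] subgroup.m_inv_closed[OF H] by simp
next
  case (Suc i)
  have "h \<in> carrier G"
    using h subgroup.subset[OF H] by auto
  then show ?case
    using derived_conj_closed[OF exp_of_derived_in_carrier[OF subgroup.subset[OF H]] _ Suc.IH]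
      Suc.prems by simp
qed

lemma solvable_generate_derived_series:
  assumes S: "S \<subseteq> carrier G" and solvable: "solvable (subgroup_generated G S)"
  shows "\<exists>n. (derived G ^^ n) (generate G S) = {\<one>}"
proof -
  let ?H = "generate G S"
  have H: "subgroup ?H G"
    using generate_is_subgroup[OF S] .
  have "subgroup_generated G S = G\<lparr>carrier := ?H\<rparr>"
    unfolding subgroup_generated_def using S by (simp add: Int_absorb1)
  then obtain n where n: "(derived (G\<lparr>carrier := ?H\<rparr>) ^^ n) ?H = {\<one>}"
    using group.solvable_iff_trivial_derived_seq[OF subgroup_imp_group[OF H]] solvable by auto
  have "(derived (G\<lparr>carrier := ?H\<rparr>) ^^ k) ?H = (derived G ^^ k) ?H" for k
    by (induction k) (simp_all add: derived_consistent[OF derived_series_subset[OF H] H])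
  then show ?thesis
    using n by auto
qed

section \<open>Periodic soluble groups are locally finite\<close>

definition locally_finite_set :: "'a set \<Rightarrow> bool" where
  "locally_finite_set M \<longleftrightarrow> (\<forall>S. finite S \<and> S \<subseteq> M \<longrightarrow> finite (generate G S))"

\<comment> \<open>\<open>T\<close> behaves like a transversal of \<open>N\<close> in \<open>N\<langle>S\<rangle>\<close>: right multiplication by \<open>S\<^sup>\<plusminus>\<^sup>1\<close> maps \<open>T\<close> into \<open>N T\<close>.\<close>
definition coset_stable :: "'a set \<Rightarrow> 'a set \<Rightarrow> 'a set \<Rightarrow> bool" where
  "coset_stable N T S \<longleftrightarrow> (\<forall>t\<in>T. \<forall>s\<in>S. t \<otimes> s \<in> N <#> T \<and> t \<otimes> inv s \<in> N <#> T)"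

lemma coset_stable_mono:
  "N \<subseteq> N' \<Longrightarrow> coset_stable N T S \<Longrightarrow> coset_stable N' T S"
  unfolding coset_stable_def using mono_set_mult[of N N' T T G] by blast

lemma coset_stable_finite_witnesses:
  assumes N: "N \<subseteq> carrier G" and T: "finite T" "T \<subseteq> carrier G"
    and S: "finite S" "S \<subseteq> carrier G" and stable: "coset_stable N T S"
  obtains Y where "finite Y" "Y \<subseteq> N" "coset_stable Y T S"
proof -
  define W where "W = (\<lambda>(t, s, t'). t \<otimes> s \<otimes> inv t') ` (T \<times> S \<times> T)
    \<union> (\<lambda>(t, s, t'). t \<otimes> inv s \<otimes> inv t') ` (T \<times> S \<times> T)"
  have witness: "z \<in> (N \<inter> W) <#> T"
    if z: "z \<in> N <#> T" "\<And>t'. t' \<in> T \<Longrightarrow> z \<otimes> inv t' \<in> W" for z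
  proof -
    obtain n t' where n: "n \<in> N" "t' \<in> T" "z = n \<otimes> t'"
      using z(1) unfolding set_mult_def by blast
    moreover have "n \<in> carrier G" "t' \<in> carrier G"
      using n N T(2) by auto
    ultimately have "n = z \<otimes> inv t'"
      by (simp add: m_assoc)
    then show ?thesis
      using n z(2) unfolding set_mult_def by blast
  qed
  have "coset_stable (N \<inter> W) T S"
    unfolding coset_stable_def
  proof (intro ballI conjI)
    fix t s assume ts: "t \<in> T" "s \<in> S"
    show "t \<otimes> s \<in> (N \<inter> W) <#> T"
    proof (rule witness)
      show "t \<otimes> s \<in> N <#> T"
        using stable ts unfolding coset_stable_def by blast
      show "t \<otimes> s \<otimes> inv t' \<in> W" if t': "t' \<in> T" for t'
        unfolding W_def using ts t' by (intro UnI1 image_eqI[of _ _ "(t, s, t')"]) auto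
    qed
    show "t \<otimes> inv s \<in> (N \<inter> W) <#> T"
    proof (rule witness)
      show "t \<otimes> inv s \<in> N <#> T"
        using stable ts unfolding coset_stable_def by blast
      show "t \<otimes> inv s \<otimes> inv t' \<in> W" if t': "t' \<in> T" for t'
        unfolding W_def using ts t' by (intro UnI2 image_eqI[of _ _ "(t, s, t')"]) auto
    qed
  qed
  moreover have "finite W"
    unfolding W_def using T S by simp
  ultimately show thesis
    using that[of "N \<inter> W"] by blast
qed

lemma finite_set_mult: "finite H \<Longrightarrow> finite K \<Longrightarrow> finite (H <#> K)"
  unfolding set_mult_def by simp

lemma generate_subset_set_mult_if_coset_stable:
  assumes L: "subgroup L G" and T: "T \<subseteq> carrier G" "\<one> \<in> T"
    and S: "S \<subseteq> carrier G" and stable: "coset_stable L T S"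
  shows "generate G S \<subseteq> L <#> T"
proof -
  have LT: "L <#> T \<subseteq> carrier G"
    using set_mult_closed[OF subgroup.subset[OF L] T(1)] .
  have left_mult: "l \<otimes> z \<in> L <#> T" if l: "l \<in> L" and z: "z \<in> L <#> T" for l z
  proof -
    obtain l' t where lt: "l' \<in> L" "t \<in> T" "z = l' \<otimes> t"
      using z unfolding set_mult_def by blast
    have "l \<in> carrier G" "l' \<in> carrier G" "t \<in> carrier G"
      using l lt subgroup.subset[OF L] T(1) by auto
    then have "l \<otimes> z = (l \<otimes> l') \<otimes> t"
      using lt(3) by (simp add: m_assoc)
    then show ?thesis
      using subgroup.m_closed[OF L l lt(1)] lt(2) unfolding set_mult_def by blast
  qed
  have right_mult: "z \<otimes> h \<in> L <#> T" if "h \<in> generate G S" "z \<in> L <#> T" for h z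
    using that
  proof (induction h arbitrary: z rule: generate.induct)
    case one
    then show ?case
      using LT by auto
  next
    case (incl s)
    obtain l t where lt: "l \<in> L" "t \<in> T" "z = l \<otimes> t"
      using incl(2) unfolding set_mult_def by blast
    have "l \<in> carrier G" "t \<in> carrier G" "s \<in> carrier G"
      using lt incl(1) S T(1) subgroup.subset[OF L] by auto
    then have "z \<otimes> s = l \<otimes> (t \<otimes> s)"
      using lt(3) by (simp add: m_assoc)
    then show ?case
      using left_mult[OF lt(1)] stable lt(2) incl(1) unfolding coset_stable_def by simp
  next
    case (inv s)
    obtain l t where lt: "l \<in> L" "t \<in> T" "z = l \<otimes> t"
      using inv(2) unfolding set_mult_def by blast
    have "l \<in> carrier G" "t \<in> carrier G" "s \<in> carrier G"
      using lt inv(1) S T(1) subgroup.subset[OF L] by auto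
    then have "z \<otimes> inv s = l \<otimes> (t \<otimes> inv s)"
      using lt(3) by (simp add: m_assoc)
    then show ?case
      using left_mult[OF lt(1)] stable lt(2) inv(1) unfolding coset_stable_def by simp
  next
    case (eng h1 h2)
    have "z \<otimes> (h1 \<otimes> h2) = z \<otimes> h1 \<otimes> h2"
      using eng(1,2,5) LT generate_in_carrier[OF S] by (auto simp add: m_assoc)
    then show ?case
      using eng by simp
  qed
  have "\<one> \<in> L <#> T"
    using subgroup.one_closed[OF L] T(2) unfolding set_mult_def by force
  then show ?thesis
    using right_mult[of _ \<one>] generate_in_carrier[OF S] by force
qed

lemma finite_generate_if_coset_stable:
  assumes N: "subgroup N G" "locally_finite_set N"
    and T: "finite T" "T \<subseteq> carrier G" "\<one> \<in> T"
    and S: "finite S" "S \<subseteq> carrier G" and stable: "coset_stable N T S"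
  shows "finite (generate G S)"
proof -
  obtain Y where Y: "finite Y" "Y \<subseteq> N" "coset_stable Y T S"
    using coset_stable_finite_witnesses[OF subgroup.subset[OF N(1)] T(1,2) S stable] .
  have YC: "Y \<subseteq> carrier G"
    using Y(2) subgroup.subset[OF N(1)] by blast
  have "finite (generate G Y)"
    using N(2) Y unfolding locally_finite_set_def by blast
  moreover have "generate G S \<subseteq> generate G Y <#> T"
  proof (rule generate_subset_set_mult_if_coset_stable[OF generate_is_subgroup[OF YC] T(2,3) S(2)])
    show "coset_stable (generate G Y) T S"
      using coset_stable_mono[OF _ Y(3)] generate.incl[of _ Y G] by blast
  qed
  ultimately show ?thesis
    using finite_subset finite_set_mult T(1) by blast
qed

lemma exists_coset_stable_transversal:
  assumes H: "subgroup H G" and N: "subgroup N G"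
    and conj_N: "\<And>h n. h \<in> H \<Longrightarrow> n \<in> N \<Longrightarrow> h \<otimes> n \<otimes> inv h \<in> N"
    and comm_N: "\<And>h1 h2. h1 \<in> H \<Longrightarrow> h2 \<in> H \<Longrightarrow> h1 \<otimes> h2 \<otimes> inv h1 \<otimes> inv h2 \<in> N"
    and S: "finite S" "S \<subseteq> H" "\<forall>s\<in>S. ord s \<noteq> 0"
  shows "\<exists>T. finite T \<and> T \<subseteq> H \<and> \<one> \<in> T \<and> coset_stable N T S"
  using S
proof (induction S rule: finite_induct)
  case empty
  show ?case
    using subgroup.one_closed[OF H] by (intro exI[of _ "{\<one>}"]) (auto simp: coset_stable_def)
next
  case (insert s S0)
  have HC: "H \<subseteq> carrier G" and NC: "N \<subseteq> carrier G"
    using subgroup.subset H N by auto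
  obtain T0 where T0: "finite T0" "T0 \<subseteq> H" "\<one> \<in> T0" "coset_stable N T0 S0"
    using insert.IH insert.prems by auto
  have sH: "s \<in> H" and s: "s \<in> carrier G" "ord s \<noteq> 0"
    using insert.prems HC by auto
  define P where "P = range (\<lambda>e::nat. s [^] e)"
  have PH: "P \<subseteq> H"
    unfolding P_def using subgroup_nat_pow_closed[OF H sH] by blast
  have P_mult: "p \<otimes> s \<in> P" "p \<otimes> inv s \<in> P" if p: "p \<in> P" for p
  proof -
    obtain e f :: nat where "p = s [^] e" "inv s = s [^] f"
      using p inv_mem_powers[OF s] unfolding P_def by blast
    then show "p \<otimes> s \<in> P" "p \<otimes> inv s \<in> P"
      unfolding P_def using s(1) by (metis nat_pow_Suc rangeI nat_pow_mult)+
  qed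
  define T where "T = T0 <#> P"
  have TH: "T \<subseteq> H"
    unfolding T_def set_mult_def using T0(2) PH subgroup.m_closed[OF H] by (auto simp: subset_iff)
  have T_mem: "t \<otimes> p \<in> T" if "t \<in> T0" "p \<in> P" for t p
    unfolding T_def set_mult_def using that by blast
  have T_in_NT: "z \<in> N <#> T" if z: "z \<in> T" for z
  proof -
    have "z = \<one> \<otimes> z"
      using z TH HC by auto
    then show ?thesis
      using z subgroup.one_closed[OF N] unfolding set_mult_def by blast
  qed
  have absorb: "n \<otimes> w \<otimes> k \<in> N <#> T" if "n \<in> N" "w \<in> T" "k \<in> N" for n w k
  proof -
    have c: "n \<in> carrier G" "w \<in> carrier G" "k \<in> carrier G"
      using that NC TH HC by auto
    have "n \<otimes> w \<otimes> k = (n \<otimes> (w \<otimes> k \<otimes> inv w)) \<otimes> w"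
      using c by (simp add: m_assoc)
    moreover have "n \<otimes> (w \<otimes> k \<otimes> inv w) \<in> N"
      using subgroup.m_closed[OF N that(1) conj_N] that TH by (auto simp: subset_iff)
    ultimately show ?thesis
      using that(2) unfolding set_mult_def by blast
  qed
  \<comment> \<open>Moving a power \<open>p\<close> of \<open>s\<close> past \<open>w\<close> costs a commutator, which lies in \<open>N\<close>.\<close>
  have move: "t \<otimes> p \<otimes> w \<in> N <#> T"
    if t: "t \<in> T0" and p: "p \<in> P" and w: "w \<in> H" and tw: "t \<otimes> w \<in> N <#> T0" for t p w
  proof -
    obtain n t0 where n: "n \<in> N" "t0 \<in> T0" "t \<otimes> w = n \<otimes> t0"
      using tw unfolding set_mult_def by blast
    define k where "k = inv p \<otimes> inv w \<otimes> p \<otimes> w"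
    have k: "k \<in> N"
      unfolding k_def using comm_N[of "inv p" "inv w"] subgroup.m_inv_closed[OF H] p w PH HC
      by (simp add: subset_iff)
    have c: "t \<in> carrier G" "p \<in> carrier G" "w \<in> carrier G" "n \<in> carrier G" "t0 \<in> carrier G"
      using t p w n T0(2) PH HC NC by auto
    have "t \<otimes> p \<otimes> w = (t \<otimes> w) \<otimes> p \<otimes> k"
      unfolding k_def using c by (simp add: m_assoc)
    also have "\<dots> = n \<otimes> (t0 \<otimes> p) \<otimes> k"
      using n(3) c by (simp add: m_assoc)
    finally show ?thesis
      using absorb[OF n(1) T_mem[OF n(2) p] k] by simp
  qed
  have "coset_stable N T (insert s S0)"
    unfolding coset_stable_def
  proof (intro ballI)
    fix z u assume z: "z \<in> T" and u: "u \<in> insert s S0"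
    obtain t p where tp: "t \<in> T0" "p \<in> P" "z = t \<otimes> p"
      using z unfolding T_def set_mult_def by blast
    have c: "t \<in> carrier G" "p \<in> carrier G"
      using tp T0(2) PH HC by auto
    show "z \<otimes> u \<in> N <#> T \<and> z \<otimes> inv u \<in> N <#> T"
    proof (cases "u = s")
      case True
      have "z \<otimes> s = t \<otimes> (p \<otimes> s)" "z \<otimes> inv s = t \<otimes> (p \<otimes> inv s)"
        using tp(3) c s(1) by (simp_all add: m_assoc)
      then show ?thesis
        using True T_in_NT T_mem[OF tp(1) P_mult(1)[OF tp(2)]] T_mem[OF tp(1) P_mult(2)[OF tp(2)]]
        by simp
    next
      case False
      then have "u \<in> S0" "u \<in> H"
        using u insert.prems by auto
      moreover have "inv u \<in> H"
        using subgroup.m_inv_closed[OF H] calculation(2) .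
      ultimately show ?thesis
        using move[OF tp(1,2)] T0(4) tp(1,3) unfolding coset_stable_def by simp
    qed
  qed
  moreover have "finite T"
    unfolding T_def P_def using finite_set_mult T0(1) finite_powers_if_ord_ne_0[OF s] by blast
  moreover have "\<one> \<in> T"
  proof -
    have "s [^] (0::nat) \<in> P"
      unfolding P_def by blast
    then have "\<one> \<otimes> s [^] (0::nat) \<in> T"
      using T_mem[OF T0(3)] by blast
    then show ?thesis
      by simp
  qed
  ultimately show ?case
    using TH by blast
qed

lemma periodic_solvable_locally_finite:
  assumes "subgroup H G" "\<forall>h\<in>H. ord h \<noteq> 0" "(derived G ^^ n) H = {\<one>}"
  shows "locally_finite_set H"
  using assms
proof (induction n arbitrary: H)
  case 0
  then have "H = {\<one>}"
    by simp
  then show ?case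
    unfolding locally_finite_set_def
    using generate_subgroup_incl[OF _ "0.prems"(1)] finite_subset by blast
next
  case (Suc n)
  note H = Suc.prems(1)
  have HC: "H \<subseteq> carrier G"
    using subgroup.subset[OF H] .
  define N where "N = derived G H"
  have N: "subgroup N G"
    unfolding N_def using derived_is_subgroup[OF HC] .
  have NH: "N \<subseteq> H"
    unfolding N_def using derived_incl[OF subset_refl H] .
  have "(derived G ^^ n) N = {\<one>}"
    using Suc.prems(3) unfolding N_def by (simp add: funpow_swap1)
  moreover have "\<forall>h\<in>N. ord h \<noteq> 0"
    using Suc.prems(2) NH by blast
  ultimately have N_lf: "locally_finite_set N"
    using Suc.IH[OF N] by simp
  have conj_N: "h \<otimes> m \<otimes> inv h \<in> N" if "h \<in> H" "m \<in> N" for h m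
    using derived_series_conj_closed[OF H that(1), of _ 1] that(2) unfolding N_def by simp
  have comm_N: "h1 \<otimes> h2 \<otimes> inv h1 \<otimes> inv h2 \<in> N" if "h1 \<in> H" "h2 \<in> H" for h1 h2
    unfolding N_def using derived_set_mem_derived[OF that] .
  show ?case
    unfolding locally_finite_set_def
  proof (intro allI impI, elim conjE)
    fix S assume S: "finite S" "S \<subseteq> H"
    then have "\<forall>s\<in>S. ord s \<noteq> 0"
      using Suc.prems(2) by blast
    then obtain T where T: "finite T" "T \<subseteq> H" "\<one> \<in> T" "coset_stable N T S"
      using exists_coset_stable_transversal[OF H N conj_N comm_N S] by blast
    have "T \<subseteq> carrier G" "S \<subseteq> carrier G"
      using T(2) S(2) HC by auto
    then show "finite (generate G S)"
      using finite_generate_if_coset_stable[OF N N_lf T(1) _ T(3) S(1) _ T(4)] by blast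
  qed
qed

end

section \<open>Conjugation acting on \<open>A/A'\<close>\<close>

text \<open>
  Conjugation \<open>\<tau>\<close> by \<open>x\<close> induces an automorphism of the abelian group \<open>Q = A/A'\<close>. Modulo
  \<open>A'\<close> the Engel commutators \<open>[a, k x]\<close> are the iterated differences \<open>(\<tau> - 1)\<^sup>k a\<close>, and
  \<open>[x, n (a x)]\<close> is congruent to \<open>\<tau>([a, n x])\<^sup>-\<^sup>1\<close>.
\<close>

locale conj_action_mod_derived = group G for G (structure) +
  fixes A and x
  assumes A_subgroup: "subgroup A G" and x_carrier: "x \<in> carrier G"
    and conj_inv_x_closed: "\<And>u. u \<in> A \<Longrightarrow> inv x \<otimes> u \<otimes> x \<in> A"
    and conj_x_closed: "\<And>u. u \<in> A \<Longrightarrow> x \<otimes> u \<otimes> inv x \<in> A"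
begin

abbreviation D :: "'a set" where "D \<equiv> derived G A"

definition Q :: "'a set monoid" where "Q = G\<lparr>carrier := A\<rparr> Mod D"

definition cls :: "'a \<Rightarrow> 'a set" where "cls u = D #> u"

definition tau :: "'a \<Rightarrow> 'a" where "tau u = inv x \<otimes> u \<otimes> x"

lemma A_carrier: "u \<in> A \<Longrightarrow> u \<in> carrier G"
  using subgroup.subset[OF A_subgroup] by auto

lemma D_subgroup: "subgroup D G"
  using derived_is_subgroup[OF subgroup.subset[OF A_subgroup]] .

sublocale Q: comm_group Q
  unfolding Q_def by (rule derived_quot_of_subgroup_is_comm_group[OF A_subgroup])

lemma cls_hom: "cls \<in> hom (G\<lparr>carrier := A\<rparr>) Q"
proof -
  have "(\<lambda>u. D #>\<^bsub>G\<lparr>carrier := A\<rparr>\<^esub> u) \<in> hom (G\<lparr>carrier := A\<rparr>) Q"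
    unfolding Q_def using normal.r_coset_hom_Mod[OF derived_subgroup_is_normal[OF A_subgroup]] .
  then show ?thesis
    unfolding cls_def by (simp add: r_coset_def)
qed

sublocale cls: group_hom "G\<lparr>carrier := A\<rparr>" Q cls
  using subgroup_imp_group[OF A_subgroup] Q.is_group cls_hom
  by (simp add: group_hom_def group_hom_axioms_def)

lemma cls_closed: "u \<in> A \<Longrightarrow> cls u \<in> carrier Q"
  using cls.hom_closed by simp

lemma cls_mult: "u \<in> A \<Longrightarrow> v \<in> A \<Longrightarrow> cls (u \<otimes> v) = cls u \<otimes>\<^bsub>Q\<^esub> cls v"
  using cls.hom_mult by simp

lemma cls_inv: "u \<in> A \<Longrightarrow> cls (inv u) = inv\<^bsub>Q\<^esub> (cls u)"
  using cls.hom_inv[of u] m_inv_consistent[OF A_subgroup] by simp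

lemma cls_nat_pow: "u \<in> A \<Longrightarrow> cls (u [^] (m::nat)) = cls u [^]\<^bsub>Q\<^esub> m"
  using cls.hom_nat_pow[of u m] nat_pow_consistent[of u m A] by simp

lemma cls_eq_one_iff: "u \<in> A \<Longrightarrow> cls u = \<one>\<^bsub>Q\<^esub> \<longleftrightarrow> u \<in> D"
proof -
  assume u: "u \<in> A"
  have "\<one>\<^bsub>Q\<^esub> = D"
    unfolding Q_def by simp
  then show ?thesis
    unfolding cls_def using coset_join1[where H=D and x=u] coset_join2[where H=D and x=u] D_subgroup A_carrier[OF u]
    by blast
qed

lemma cls_eq_iff: "u \<in> A \<Longrightarrow> v \<in> A \<Longrightarrow> cls u = cls v \<longleftrightarrow> u \<otimes> inv v \<in> D"
proof -
  assume uv: "u \<in> A" "v \<in> A"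
  have "cls (u \<otimes> inv v) = cls u \<otimes>\<^bsub>Q\<^esub> inv\<^bsub>Q\<^esub> cls v"
    using uv cls_mult cls_inv subgroup.m_inv_closed[OF A_subgroup] by simp
  moreover have "u \<otimes> inv v \<in> A"
    using uv subgroup.m_closed[OF A_subgroup] subgroup.m_inv_closed[OF A_subgroup] by blast
  moreover have "cls u \<otimes>\<^bsub>Q\<^esub> inv\<^bsub>Q\<^esub> cls v = \<one>\<^bsub>Q\<^esub> \<longleftrightarrow> cls u = cls v"
    using Q.inv_solve_right'[of "\<one>\<^bsub>Q\<^esub>" "cls u" "cls v"] cls_closed uv by simp
  ultimately show ?thesis
    using cls_eq_one_iff by metis
qed

lemma tau_closed: "u \<in> carrier G \<Longrightarrow> tau u \<in> carrier G"
  unfolding tau_def using x_carrier by simp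

lemma tau_in_A: "u \<in> A \<Longrightarrow> tau u \<in> A"
  unfolding tau_def using conj_inv_x_closed .

lemma tau_mult: "u \<in> carrier G \<Longrightarrow> v \<in> carrier G \<Longrightarrow> tau (u \<otimes> v) = tau u \<otimes> tau v"
  unfolding tau_def using x_carrier by (simp add: m_assoc)

lemma tau_inv: "u \<in> carrier G \<Longrightarrow> tau (inv u) = inv (tau u)"
  unfolding tau_def using x_carrier by (simp add: m_assoc inv_mult_group)

lemma tau_nat_pow: "u \<in> carrier G \<Longrightarrow> tau (u [^] (m::nat)) = tau u [^] m"
proof (induction m)
  case (Suc m)
  then show ?case
    using tau_mult[of "u [^] m" u] by simp
qed (simp add: tau_def x_carrier)

lemma tau_funpow: "u \<in> carrier G \<Longrightarrow> (tau ^^ k) u = inv (x [^] k) \<otimes> u \<otimes> x [^] k"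
proof (induction k)
  case (Suc k)
  then show ?case
    unfolding tau_def using x_carrier by (simp add: m_assoc inv_mult_group)
qed simp

lemma tau_in_D_iff: "u \<in> carrier G \<Longrightarrow> tau u \<in> D \<longleftrightarrow> u \<in> D"
proof
  assume u: "u \<in> carrier G"
  have "x \<otimes> tau u \<otimes> inv x = u"
    unfolding tau_def using x_carrier u by (simp add: m_assoc)
  then show "u \<in> D" if "tau u \<in> D"
    using derived_conj_closed[OF subgroup.subset[OF A_subgroup] x_carrier conj_x_closed that]
    by simp
  show "tau u \<in> D" if "u \<in> D"
    using derived_conj_closed[OF subgroup.subset[OF A_subgroup] _ _ that, of "inv x"]
      conj_inv_x_closed x_carrier
    unfolding tau_def by simp
qed

lemma cls_tau_cong:
  assumes u: "u \<in> A" and v: "v \<in> A" and eq: "cls u = cls v"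
  shows "cls (tau u) = cls (tau v)"
proof -
  have "tau (u \<otimes> inv v) \<in> D"
    using eq u v cls_eq_iff tau_in_D_iff A_carrier by simp
  moreover have "tau (u \<otimes> inv v) = tau u \<otimes> inv (tau v)"
    using u v A_carrier tau_mult tau_inv by simp
  ultimately show ?thesis
    using cls_eq_iff tau_in_A u v by simp
qed

lemma tau_funpow_in_A: "u \<in> A \<Longrightarrow> (tau ^^ k) u \<in> A"
  by (induction k) (simp_all add: tau_in_A)

lemma cls_pow_eq_one_if_tau_translates:
  assumes v: "v \<in> A" and w: "w \<in> A" and xr: "x [^] (r::nat) = \<one>"
    and tau_v: "cls (tau v) = cls v \<otimes>\<^bsub>Q\<^esub> cls w" and tau_w: "cls (tau w) = cls w"
  shows "cls w [^]\<^bsub>Q\<^esub> r = \<one>\<^bsub>Q\<^esub>"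
proof -
  have cv: "cls v \<in> carrier Q" and cw: "cls w \<in> carrier Q"
    using cls_closed v w by auto
  have iter: "cls ((tau ^^ k) v) = cls v \<otimes>\<^bsub>Q\<^esub> cls w [^]\<^bsub>Q\<^esub> k" for k
  proof (induction k)
    case 0
    then show ?case
      using cv by simp
  next
    case (Suc k)
    have wk: "w [^] k \<in> A" and twk: "tau w [^] k \<in> A"
      using subgroup_nat_pow_closed[OF A_subgroup] w tau_in_A by auto
    have "cls ((tau ^^ k) v) = cls (v \<otimes> w [^] k)"
      using Suc cls_mult[OF v wk] cls_nat_pow[OF w] by simp
    then have "cls ((tau ^^ Suc k) v) = cls (tau (v \<otimes> w [^] k))"
      using cls_tau_cong tau_funpow_in_A v wk subgroup.m_closed[OF A_subgroup] by simp
    also have "\<dots> = cls (tau v \<otimes> tau w [^] k)"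
      using v w A_carrier by (simp add: tau_mult tau_nat_pow)
    also have "\<dots> = cls (tau v) \<otimes>\<^bsub>Q\<^esub> cls (tau w) [^]\<^bsub>Q\<^esub> k"
      using cls_mult cls_nat_pow tau_in_A v w twk by simp
    also have "\<dots> = cls v \<otimes>\<^bsub>Q\<^esub> cls w [^]\<^bsub>Q\<^esub> Suc k"
      using tau_v tau_w cv cw Q.m_comm[OF cw Q.nat_pow_closed[OF cw, of k]] by (simp add: Q.m_assoc)
    finally show ?case .
  qed
  have "(tau ^^ r) v = v"
    using tau_funpow xr A_carrier[OF v] by simp
  then have "cls v = cls v \<otimes>\<^bsub>Q\<^esub> cls w [^]\<^bsub>Q\<^esub> r"
    using iter[of r] by simp
  then show ?thesis
    using cv cw by simp
qed

lemma commutator_x_eq: "u \<in> carrier G \<Longrightarrow> commutator G u x = inv u \<otimes> tau u"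
  unfolding commutator_def tau_def using x_carrier by (simp add: m_assoc)

lemma engel_comm_in_A: "a \<in> A \<Longrightarrow> engel_comm G a x k \<in> A"
proof (induction k)
  case (Suc k)
  then show ?case
    using commutator_x_eq[OF A_carrier] tau_in_A subgroup.m_closed[OF A_subgroup]
      subgroup.m_inv_closed[OF A_subgroup] by simp
qed simp

lemma cls_tau_engel_comm:
  assumes a: "a \<in> A"
  shows "cls (tau (engel_comm G a x k)) = cls (engel_comm G a x k) \<otimes>\<^bsub>Q\<^esub> cls (engel_comm G a x (Suc k))"
proof -
  have "tau (engel_comm G a x k) = engel_comm G a x k \<otimes> engel_comm G a x (Suc k)"
    using commutator_x_eq A_carrier[OF engel_comm_in_A[OF a]] tau_closed by simp
  then show ?thesis
    using cls_mult engel_comm_in_A[OF a, of k] engel_comm_in_A[OF a, of "Suc k"] by simp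
qed

lemma engel_comm_x_in_A:
  assumes a: "a \<in> A"
  shows "engel_comm G x (a \<otimes> x) (Suc k) \<in> A"
proof (induction k)
  case 0
  have "engel_comm G x (a \<otimes> x) (Suc 0) = tau (tau (inv a) \<otimes> a)"
    unfolding tau_def using x_carrier A_carrier[OF a]
    by (simp add: commutator_def m_assoc inv_mult_group)
  then show ?case
    using tau_in_A subgroup.m_closed[OF A_subgroup] subgroup.m_inv_closed[OF A_subgroup] a
    by simp
next
  case (Suc k)
  let ?e = "engel_comm G x (a \<otimes> x) (Suc k)"
  have "engel_comm G x (a \<otimes> x) (Suc (Suc k)) = inv ?e \<otimes> tau (inv a \<otimes> ?e \<otimes> a)"
    unfolding tau_def using x_carrier A_carrier[OF a] A_carrier[OF Suc]
    by (simp add: commutator_def m_assoc inv_mult_group)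
  then show ?case
    using tau_in_A subgroup.m_closed[OF A_subgroup] subgroup.m_inv_closed[OF A_subgroup] Suc a
    by simp
qed

lemma cls_engel_comm_x:
  assumes a: "a \<in> A"
  shows "cls (engel_comm G x (a \<otimes> x) (Suc k)) = cls (tau (inv (engel_comm G a x (Suc k))))"
proof (induction k)
  case 0
  have "engel_comm G x (a \<otimes> x) (Suc 0) = tau (inv (engel_comm G a x (Suc 0)))"
    unfolding tau_def using x_carrier A_carrier[OF a]
    by (simp add: commutator_def m_assoc inv_mult_group)
  then show ?case
    by simp
next
  case (Suc k)
  let ?e = "engel_comm G x (a \<otimes> x) (Suc k)"
  let ?d = "engel_comm G a x (Suc k)"
  have eA: "?e \<in> A" and dA: "?d \<in> A" and iaA: "inv a \<in> A" and ieA: "inv ?e \<in> A"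
    using engel_comm_x_in_A[OF a] engel_comm_in_A[OF a, of "Suc k"] a
      subgroup.m_inv_closed[OF A_subgroup] by auto
  have "engel_comm G x (a \<otimes> x) (Suc (Suc k)) = inv ?e \<otimes> (tau (inv a) \<otimes> tau ?e \<otimes> tau a)"
    unfolding tau_def using x_carrier A_carrier[OF a] A_carrier[OF eA]
    by (simp add: commutator_def m_assoc inv_mult_group)
  then have "cls (engel_comm G x (a \<otimes> x) (Suc (Suc k)))
      = cls (inv ?e) \<otimes>\<^bsub>Q\<^esub> (cls (tau (inv a)) \<otimes>\<^bsub>Q\<^esub> cls (tau ?e) \<otimes>\<^bsub>Q\<^esub> cls (tau a))"
    using cls_mult tau_in_A eA a iaA ieA subgroup.m_closed[OF A_subgroup] by simp
  also have "\<dots> = inv\<^bsub>Q\<^esub> cls ?e \<otimes>\<^bsub>Q\<^esub> cls (tau ?e)"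
  proof -
    have "cls (tau (inv a)) = inv\<^bsub>Q\<^esub> cls (tau a)"
      using tau_inv A_carrier a cls_inv tau_in_A by simp
    then show ?thesis
      using cls_closed cls_inv tau_in_A eA a by (simp add: Q.m_ac)
  qed
  also have "\<dots> = inv\<^bsub>Q\<^esub> cls (tau (inv ?d)) \<otimes>\<^bsub>Q\<^esub> cls (tau (tau (inv ?d)))"
    using Suc cls_tau_cong[OF eA tau_in_A Suc] subgroup.m_inv_closed[OF A_subgroup dA] by simp
  also have "\<dots> = cls (tau (inv (engel_comm G a x (Suc (Suc k)))))"
  proof -
    have dc: "?d \<in> carrier G" and td: "tau ?d \<in> A" and itd: "inv (tau ?d) \<in> A"
      using A_carrier dA tau_in_A subgroup.m_inv_closed[OF A_subgroup] by auto
    have "inv (engel_comm G a x (Suc (Suc k))) = inv (tau ?d) \<otimes> ?d"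
      using commutator_x_eq[OF dc] dc tau_closed by (simp add: inv_mult_group)
    then have "cls (tau (inv (engel_comm G a x (Suc (Suc k)))))
        = cls (tau (inv (tau ?d))) \<otimes>\<^bsub>Q\<^esub> cls (tau ?d)"
      using dc tau_closed tau_mult cls_mult tau_in_A td itd dA by simp
    moreover have "inv\<^bsub>Q\<^esub> cls (tau (inv ?d)) = cls (tau ?d)"
      using tau_inv[OF dc] cls_inv[OF td] cls_closed[OF td] by simp
    ultimately show ?thesis
      using Q.m_comm cls_closed tau_in_A td itd tau_inv[OF dc] by simp
  qed
  finally show ?case .
qed

lemma engel_comm_in_D_if_engel:
  assumes a: "a \<in> A" and n: "0 < n" and engel: "engel_comm G x (a \<otimes> x) n = \<one>"
  shows "engel_comm G a x n \<in> D"
proof -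
  obtain k where k: "n = Suc k"
    using n gr0_implies_Suc by blast
  have dA: "engel_comm G a x n \<in> A" and idA: "inv (engel_comm G a x n) \<in> A"
    using engel_comm_in_A[OF a] subgroup.m_inv_closed[OF A_subgroup] by auto
  have "cls (tau (inv (engel_comm G a x n))) = \<one>\<^bsub>Q\<^esub>"
    using cls_engel_comm_x[OF a, of k] engel k cls_eq_one_iff[of \<one>]
      subgroup.one_closed[OF A_subgroup] subgroup.one_closed[OF D_subgroup] by simp
  then have "inv (engel_comm G a x n) \<in> D"
    using cls_eq_one_iff tau_in_A[OF idA] tau_in_D_iff A_carrier[OF idA] by simp
  then show ?thesis
    using subgroup.m_inv_closed[OF D_subgroup] A_carrier[OF dA] by (metis inv_inv)
qed

lemma cls_engel_comm_pow_eq_one: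
  assumes a: "a \<in> A" and xr: "x [^] (r::nat) = \<one>"
    and top: "cls (engel_comm G a x n) = \<one>\<^bsub>Q\<^esub>"
  shows "j + k = n \<Longrightarrow> 0 < j \<Longrightarrow> cls (engel_comm G a x j) [^]\<^bsub>Q\<^esub> (r ^ k) = \<one>\<^bsub>Q\<^esub>"
proof (induction k arbitrary: j)
  case 0
  then show ?case
    using top by simp
next
  case (Suc k)
  obtain i where j: "j = Suc i"
    using Suc.prems(2) gr0_implies_Suc by blast
  let ?c = "\<lambda>l. cls (engel_comm G a x l)" and ?M = "r ^ k"
  have c: "?c l \<in> carrier Q" for l
    using cls_closed engel_comm_in_A a by simp
  define v where "v = engel_comm G a x i [^] ?M"
  define w where "w = engel_comm G a x j [^] ?M"
  have vw: "v \<in> A" "w \<in> A"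
    unfolding v_def w_def using subgroup_nat_pow_closed[OF A_subgroup engel_comm_in_A[OF a]] by auto
  have cls_vw: "cls v = ?c i [^]\<^bsub>Q\<^esub> ?M" "cls w = ?c j [^]\<^bsub>Q\<^esub> ?M"
    unfolding v_def w_def using cls_nat_pow engel_comm_in_A a by auto
  have cls_tau_pow: "cls (tau (engel_comm G a x l [^] ?M)) = ?c l [^]\<^bsub>Q\<^esub> ?M \<otimes>\<^bsub>Q\<^esub> ?c (Suc l) [^]\<^bsub>Q\<^esub> ?M" for l
  proof -
    have "cls (tau (engel_comm G a x l [^] ?M)) = cls (tau (engel_comm G a x l)) [^]\<^bsub>Q\<^esub> ?M"
      using tau_nat_pow cls_nat_pow A_carrier engel_comm_in_A tau_in_A a by simp
    then show ?thesis
      using cls_tau_engel_comm[OF a] Q.nat_pow_distrib c[of l] c[of "Suc l"] by simp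
  qed
  have "cls (tau v) = cls v \<otimes>\<^bsub>Q\<^esub> cls w"
    using cls_tau_pow[of i] cls_vw j unfolding v_def by simp
  moreover have "cls (tau w) = cls w"
    using cls_tau_pow[of j] Suc.IH[of "Suc j"] Suc.prems cls_vw c unfolding w_def by simp
  ultimately have "cls w [^]\<^bsub>Q\<^esub> r = \<one>\<^bsub>Q\<^esub>"
    using cls_pow_eq_one_if_tau_translates[OF vw xr] by blast
  then show ?case
    using cls_vw c Q.nat_pow_pow by (simp add: mult.commute)
qed

lemma commutator_pow_in_derived_if_engel:
  assumes a: "a \<in> A" and r: "0 < r" "x [^] (r::nat) = \<one>"
    and n: "0 < n" "engel_comm G x (a \<otimes> x) n = \<one>"
  shows "\<exists>R>0. \<forall>m. R dvd m \<longrightarrow> commutator G x (a [^] (m::nat)) \<in> D"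
proof (intro exI[of _ "r ^ (n - 1)"] conjI allI impI)
  show "0 < r ^ (n - 1)"
    using r by simp
  fix m :: nat assume "r ^ (n - 1) dvd m"
  then obtain q where q: "m = r ^ (n - 1) * q"
    by blast
  let ?c1 = "cls (engel_comm G a x 1)"
  have c1: "?c1 \<in> carrier Q"
    using cls_closed[OF engel_comm_in_A[OF a]] .
  have top: "cls (engel_comm G a x n) = \<one>\<^bsub>Q\<^esub>"
    using engel_comm_in_D_if_engel[OF a n] cls_eq_one_iff engel_comm_in_A a by simp
  then have "?c1 [^]\<^bsub>Q\<^esub> (r ^ (n - 1)) = \<one>\<^bsub>Q\<^esub>"
    using cls_engel_comm_pow_eq_one[OF a r(2) top, of 1 "n - 1"] n(1) by simp
  then have c1m: "?c1 [^]\<^bsub>Q\<^esub> m = \<one>\<^bsub>Q\<^esub>"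
    using q c1 Q.nat_pow_pow[symmetric] by simp
  define c where "c = a [^] m"
  have cA: "c \<in> A" and icA: "inv c \<in> A"
    unfolding c_def using subgroup_nat_pow_closed[OF A_subgroup a] subgroup.m_inv_closed[OF A_subgroup] by auto
  have "cls (tau c) = cls (tau a) [^]\<^bsub>Q\<^esub> m"
    unfolding c_def using tau_nat_pow A_carrier[OF a] cls_nat_pow tau_in_A a by simp
  also have "\<dots> = (cls a \<otimes>\<^bsub>Q\<^esub> ?c1) [^]\<^bsub>Q\<^esub> m"
    using cls_tau_engel_comm[OF a, of 0] by simp
  also have "\<dots> = cls c"
    unfolding c_def using Q.nat_pow_distrib cls_closed a c1 c1m cls_nat_pow by simp
  finally have "cls (tau c) = cls c" .
  moreover have "commutator G x c = tau (inv c) \<otimes> c"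
    unfolding tau_def commutator_def using x_carrier A_carrier[OF cA] by (simp add: m_assoc)
  ultimately have "cls (commutator G x c) = \<one>\<^bsub>Q\<^esub>"
    using cls_mult[OF tau_in_A[OF icA] cA] tau_inv A_carrier[OF cA] cls_inv tau_in_A[OF cA] cls_closed[OF cA]
    by simp
  moreover have "commutator G x c \<in> A"
    using \<open>commutator G x c = tau (inv c) \<otimes> c\<close> subgroup.m_closed[OF A_subgroup tau_in_A[OF icA] cA] by simp
  ultimately show "commutator G x (a [^] m) \<in> D"
    using cls_eq_one_iff unfolding c_def by blast
qed

end

context group
begin

section \<open>Periodicity from right Engel elements\<close>

lemma engel_commutator_pow_in_derived:
  assumes F: "subgroup F G" "finite F" "F \<subseteq> right_engel_elements G"
    and A: "subgroup A G" and conj_A: "\<And>h u. h \<in> F \<Longrightarrow> u \<in> A \<Longrightarrow> h \<otimes> u \<otimes> inv h \<in> A"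
    and a: "a \<in> A"
  shows "\<exists>M>0. \<forall>y\<in>F. commutator G y (a [^] (M::nat)) \<in> derived G A"
proof -
  have "\<exists>R>0. \<forall>m. R dvd m \<longrightarrow> commutator G y (a [^] (m::nat)) \<in> derived G A" if y: "y \<in> F" for y
  proof -
    have yc: "y \<in> carrier G" and iy: "inv y \<in> F"
      using subgroup.mem_carrier[OF F(1) y] subgroup.m_inv_closed[OF F(1) y] by auto
    have "inv y \<otimes> u \<otimes> y \<in> A" if "u \<in> A" for u
      using conj_A[OF iy that] yc by simp
    then interpret conj_action_mod_derived G A y
      using A yc conj_A[OF y]
      by (intro conj_action_mod_derived.intro conj_action_mod_derived_axioms.intro is_group)
    have r: "0 < ord y" "y [^] ord y = \<one>"
      using ord_ne_0_in_finite_subgroup[OF F(1,2) y] yc by auto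
    have "a \<otimes> y \<in> carrier G"
      using A_carrier[OF a] yc by simp
    then obtain n where n: "0 < n" "engel_comm G y (a \<otimes> y) n = \<one>"
      using F(3) y unfolding right_engel_elements_def by blast
    show ?thesis
      using commutator_pow_in_derived_if_engel[OF a r n] .
  qed
  then have "\<forall>y\<in>F. \<exists>R. 0 < R \<and> (\<forall>m. R dvd m \<longrightarrow> commutator G y (a [^] (m::nat)) \<in> derived G A)"
    by blast
  then obtain R where R: "\<forall>y\<in>F. 0 < R y \<and> (\<forall>m. R y dvd m \<longrightarrow> commutator G y (a [^] (m::nat)) \<in> derived G A)"
    by (metis bchoice)
  show ?thesis
  proof (intro exI[of _ "\<Prod>y\<in>F. R y"] conjI ballI)
    show "0 < (\<Prod>y\<in>F. R y)"
      using R by (simp add: prod_pos)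
    show "commutator G y (a [^] (\<Prod>y\<in>F. R y)) \<in> derived G A" if "y \<in> F" for y
      using R dvd_prodI[OF F(2) that] that by blast
  qed
qed

lemma exists_pow_centralizing_if_normalizes_finite:
  assumes c: "c \<in> carrier G" and M: "finite M" "M \<subseteq> carrier G" and Y: "Y \<subseteq> M"
    and conj_M: "\<And>m. m \<in> M \<Longrightarrow> inv c \<otimes> m \<otimes> c \<in> M"
  shows "\<exists>e>0. \<forall>y\<in>Y. c [^] (e::nat) \<otimes> y = y \<otimes> c [^] e"
proof -
  have conj_pow_M: "inv (c [^] j) \<otimes> m \<otimes> c [^] j \<in> M" if m: "m \<in> M" for j :: nat and m
  proof (induction j)
    case 0
    then show ?case
      using m M(2) by (simp add: subsetD)
  next
    case (Suc j)
    have "m \<in> carrier G"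
      using m M(2) by blast
    then have "inv (c [^] Suc j) \<otimes> m \<otimes> c [^] Suc j = inv c \<otimes> (inv (c [^] j) \<otimes> m \<otimes> c [^] j) \<otimes> c"
      using c by (simp add: m_assoc inv_mult_group)
    then show ?case
      using conj_M[OF Suc.IH] by simp
  qed
  define f where "f j = restrict (\<lambda>y. inv (c [^] j) \<otimes> y \<otimes> c [^] j) Y" for j :: nat
  have "range f \<subseteq> Y \<rightarrow>\<^sub>E M"
    unfolding f_def using conj_pow_M Y by (auto simp: restrict_PiE_iff)
  moreover have "finite (Y \<rightarrow>\<^sub>E M)"
    by (rule finite_PiE[OF finite_subset[OF Y M(1)] M(1)])
  ultimately have "finite (range f)"
    by (rule finite_subset)
  then obtain i j where ij: "i < j" "f i = f j"
    by (rule finite_range_nat_repeats)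
  define e where "e = j - i"
  have cj: "c [^] j = c [^] e \<otimes> c [^] i"
    unfolding e_def using ij(1) c by (simp add: nat_pow_mult)
  show ?thesis
  proof (intro exI[of _ e] conjI ballI)
    show "0 < e"
      unfolding e_def using ij(1) by simp
    fix y assume y: "y \<in> Y"
    have yc: "y \<in> carrier G"
      using y Y M(2) by auto
    define z where "z = inv (c [^] e) \<otimes> y \<otimes> c [^] e"
    have zc: "z \<in> carrier G"
      unfolding z_def using c yc by simp
    have "inv (c [^] i) \<otimes> y \<otimes> c [^] i = inv (c [^] j) \<otimes> y \<otimes> c [^] j"
      using fun_cong[OF ij(2), of y] y unfolding f_def by simp
    also have "\<dots> = inv (c [^] i) \<otimes> z \<otimes> c [^] i"
      unfolding cj z_def using c yc by (simp add: m_assoc inv_mult_group)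
    finally have "inv (c [^] e) \<otimes> y \<otimes> c [^] e = y"
      using c yc zc unfolding z_def[symmetric] by (simp add: m_assoc)
    then have "c [^] e \<otimes> y = c [^] e \<otimes> (inv (c [^] e) \<otimes> y \<otimes> c [^] e)"
      by simp
    also have "\<dots> = y \<otimes> c [^] e"
      using c yc by (simp add: m_assoc)
    finally show "c [^] e \<otimes> y = y \<otimes> c [^] e" .
  qed
qed

lemma finite_engel_closure:
  assumes F: "subgroup F G" "finite F" "F \<subseteq> right_engel_elements G"
    and B: "subgroup B G" "locally_finite_set B"
    and conj_B: "\<And>h b. h \<in> F \<Longrightarrow> b \<in> B \<Longrightarrow> h \<otimes> b \<otimes> inv h \<in> B"
    and c: "c \<in> carrier G" and engel_B: "\<And>y k. y \<in> F \<Longrightarrow> engel_comm G y c (Suc k) \<in> B"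
  shows "\<exists>M. finite M \<and> M \<subseteq> carrier G \<and> F \<subseteq> M \<and> (\<forall>u\<in>M. inv c \<otimes> u \<otimes> c \<in> M)"
proof -
  have FC: "F \<subseteq> carrier G" and BC: "B \<subseteq> carrier G"
    using subgroup.subset F(1) B(1) by auto
  have "\<forall>y\<in>F. \<exists>n. 0 < n \<and> engel_comm G y c n = \<one>"
    using F(3) c unfolding right_engel_elements_def by blast
  then obtain n where n: "\<forall>y\<in>F. 0 < n y \<and> engel_comm G y c (n y) = \<one>"
    by (metis bchoice)
  define Y where "Y = F \<union> (\<lambda>(y, k). engel_comm G y c k) ` (SIGMA y:F. {1..n y})"
  have engel_Y: "engel_comm G y c k \<in> Y" if "y \<in> F" "1 \<le> k" "k \<le> n y" for y k
    unfolding Y_def using that by (intro UnI2 image_eqI[of _ _ "(y, k)"]) auto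
  have Y_cases: "s \<in> F \<or> s \<in> B" if "s \<in> Y" for s
  proof -
    have "engel_comm G y c k \<in> B" if "y \<in> F" "1 \<le> k" for y k
      using engel_B[OF that(1), of "k - 1"] that(2) by simp
    then show ?thesis
      using \<open>s \<in> Y\<close> unfolding Y_def by auto
  qed
  have YC: "Y \<subseteq> carrier G"
    using Y_cases FC BC by blast
  have stable: "coset_stable B F Y"
    unfolding coset_stable_def
  proof (intro ballI conjI)
    fix t s assume t: "t \<in> F" and s: "s \<in> Y"
    have tc: "t \<in> carrier G"
      using t FC by blast
    have F_part: "z \<in> B <#> F" if "z \<in> F" for z
    proof -
      have "z = \<one> \<otimes> z"
        using that FC by auto
      then show ?thesis
        using that subgroup.one_closed[OF B(1)] unfolding set_mult_def by blast
    qed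
    have B_part: "t \<otimes> b \<in> B <#> F" if "b \<in> B" for b
    proof -
      have "t \<otimes> b = (t \<otimes> b \<otimes> inv t) \<otimes> t"
        using tc that BC by (auto simp: m_assoc)
      then show ?thesis
        using conj_B[OF t that] t unfolding set_mult_def by blast
    qed
    show "t \<otimes> s \<in> B <#> F" "t \<otimes> inv s \<in> B <#> F"
      using Y_cases[OF s] F_part B_part t subgroup.m_closed[OF F(1)] subgroup.m_inv_closed[OF F(1)]
        subgroup.m_inv_closed[OF B(1)] by auto
  qed
  define M where "M = generate G Y"
  have "finite Y"
    unfolding Y_def using F(2) by simp
  then have "finite M"
    unfolding M_def
    using finite_generate_if_coset_stable[OF B F(2) FC subgroup.one_closed[OF F(1)] _ YC stable]
    by blast
  moreover have M: "subgroup M G"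
    unfolding M_def using generate_is_subgroup[OF YC] .
  moreover have YM: "Y \<subseteq> M"
    unfolding M_def using generate.incl[of _ Y G] by blast
  moreover have "inv c \<otimes> u \<otimes> c \<in> M" if "u \<in> M" for u
  proof -
    have "inv c \<otimes> y \<otimes> inv (inv c) \<in> M" if y: "y \<in> Y" for y
    proof -
      have yc: "y \<in> carrier G"
        using y YC by blast
      have conj: "inv c \<otimes> y \<otimes> inv (inv c) = y \<otimes> commutator G y c"
        using yc c by (simp add: commutator_def m_assoc)
      have "commutator G y c \<in> M \<or> y = \<one>"
      proof (cases "y \<in> F")
        case True
        moreover have "0 < n y"
          using n True by blast
        ultimately have "commutator G y c \<in> Y"
          using engel_Y[of y 1] by (simp add: Suc_le_eq)
        then show ?thesis
          using YM by blast
      next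
        case False
        then obtain z k where zk: "z \<in> F" "1 \<le> k" "k \<le> n z" "y = engel_comm G z c k"
          using y unfolding Y_def by auto
        show ?thesis
        proof (cases "Suc k \<le> n z")
          case True
          then show ?thesis
            using engel_Y[of z "Suc k"] zk(1,4) YM by auto
        next
          case False
          then have "k = n z"
            using zk(3) by simp
          then show ?thesis
            using n zk(1,4) by simp
        qed
      qed
      then show ?thesis
        using conj subgroup.m_closed[OF M] YM y c subgroup.one_closed[OF M] by auto
    qed
    then show ?thesis
      using conj_generate_closed[of "inv c" Y M u] c YC M that unfolding M_def by simp
  qed
  ultimately show ?thesis
    using subgroup.subset[OF M] YM unfolding Y_def by blast
qed

lemma ord_ne_0_if_derived_locally_finite:
  assumes cent: "centralizer G F \<subseteq> F"
    and F: "subgroup F G" "finite F" "F \<subseteq> right_engel_elements G"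
    and A: "subgroup A G" and conj_A: "\<And>h u. h \<in> F \<Longrightarrow> u \<in> A \<Longrightarrow> h \<otimes> u \<otimes> inv h \<in> A"
    and D_lf: "locally_finite_set (derived G A)" and a: "a \<in> A"
  shows "ord a \<noteq> 0"
proof -
  have AC: "A \<subseteq> carrier G"
    using subgroup.subset[OF A] .
  have "\<exists>m>0. \<forall>y\<in>F. commutator G y (a [^] (m::nat)) \<in> derived G A"
    by (rule engel_commutator_pow_in_derived[OF F A _ a]) (rule conj_A)
  then obtain m :: nat where m: "0 < m" "\<forall>y\<in>F. commutator G y (a [^] m) \<in> derived G A"
    by blast
  define c where "c = a [^] m"
  have cA: "c \<in> A" and cc: "c \<in> carrier G"
    unfolding c_def using subgroup_nat_pow_closed[OF A a] AC by auto
  have engel_D: "engel_comm G y c (Suc k) \<in> derived G A" if y: "y \<in> F" for y k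
  proof (induction k)
    case 0
    then show ?case
      using m(2) y unfolding c_def by simp
  next
    case (Suc k)
    then show ?case
      using commutator_in_derived[OF A _ cA] derived_incl[OF subset_refl A] by auto
  qed
  have conj_D: "h \<otimes> b \<otimes> inv h \<in> derived G A" if "h \<in> F" "b \<in> derived G A" for h b
    using derived_conj_closed[OF AC _ conj_A] subgroup.mem_carrier[OF F(1)] that by blast
  obtain M where M: "finite M" "M \<subseteq> carrier G" "F \<subseteq> M" "\<forall>u\<in>M. inv c \<otimes> u \<otimes> c \<in> M"
    using finite_engel_closure[OF F derived_is_subgroup[OF AC] D_lf conj_D cc engel_D] by blast
  obtain e where e: "0 < e" "\<forall>y\<in>F. c [^] (e::nat) \<otimes> y = y \<otimes> c [^] e"
    using exists_pow_centralizing_if_normalizes_finite[OF cc M(1-3)] M(4) by blast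
  have "c [^] e \<in> F"
    using cent e(2) cc unfolding centralizer_def by auto
  then have "ord c \<noteq> 0"
    using ord_ne_0_in_finite_subgroup[OF F(1,2)] ord_ne_0_if_pow[OF cc e(1)] by blast
  then show ?thesis
    using ord_ne_0_if_pow[OF _ m(1)] AC a unfolding c_def by blast
qed

lemma ord_ne_0_in_solvable_subgroup:
  assumes cent: "centralizer G F \<subseteq> F"
    and F: "subgroup F G" "finite F" "F \<subseteq> right_engel_elements G"
    and H: "subgroup H G" "F \<subseteq> H" and solvable: "(derived G ^^ d) H = {\<one>}"
  shows "\<forall>h\<in>H. ord h \<noteq> 0"
proof -
  have "\<forall>u\<in>(derived G ^^ i) H. ord u \<noteq> 0" if "i \<le> d" for i
    using that
  proof (induction i rule: inc_induct)
    case base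
    then show ?case
      using solvable by simp
  next
    case (step i)
    define A where "A = (derived G ^^ i) H"
    have A: "subgroup A G"
      unfolding A_def using exp_of_derived_is_subgroup[OF H(1)] .
    have conj_A: "h \<otimes> u \<otimes> inv h \<in> A" if "h \<in> F" "u \<in> A" for h u
      using derived_series_conj_closed[OF H(1)] H(2) that unfolding A_def by blast
    have "(derived G ^^ (d - Suc i)) (derived G A) = (derived G ^^ (d - Suc i + Suc i)) H"
      unfolding A_def by (simp add: funpow_add funpow_swap1)
    also have "\<dots> = {\<one>}"
      using step(2) solvable by simp
    finally have solvable_DA: "(derived G ^^ (d - Suc i)) (derived G A) = {\<one>}" .
    have "\<forall>u\<in>derived G A. ord u \<noteq> 0"
      using step(3) unfolding A_def by simp
    then have "locally_finite_set (derived G A)"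
      using periodic_solvable_locally_finite[OF derived_is_subgroup[OF subgroup.subset[OF A]] _ solvable_DA]
      by blast
    then show ?case
      using ord_ne_0_if_derived_locally_finite[OF cent F A conj_A] unfolding A_def by blast
  qed
  from this[of 0] show ?thesis
    by simp
qed

end

theorem proposition5p4:
  fixes G (structure)
  assumes "group G"
    and "locally_soluble G"
    and "\<And>H. subgroup H G \<Longrightarrow> \<not> abelian_set G H \<Longrightarrow> centralizer G H \<subseteq> H"
    and "\<exists>F. subgroup F G \<and> finite F \<and> \<not> abelian_set G F \<and> F \<subseteq> right_engel_elements G"
  shows "locally_finite G"
proof -
  interpret group G
    by (rule assms(1))
  obtain F where F: "subgroup F G" "finite F" "\<not> abelian_set G F" "F \<subseteq> right_engel_elements G"
    using assms(4) by blast
  show ?thesis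
    unfolding locally_finite_def
  proof (intro allI impI, elim conjE)
    fix S assume S: "finite S" "S \<subseteq> carrier G"
    define H where "H = generate G (F \<union> S)"
    have FS: "finite (F \<union> S)" "F \<union> S \<subseteq> carrier G"
      using F(1,2) S subgroup.subset by auto
    have H: "subgroup H G" "F \<subseteq> H" "S \<subseteq> H"
      unfolding H_def using generate_is_subgroup[OF FS(2)] generate.incl[of _ "F \<union> S" G] by auto
    have "solvable (subgroup_generated G (F \<union> S))"
      using assms(2) FS unfolding locally_soluble_def by blast
    then obtain d where d: "(derived G ^^ d) H = {\<one>}"
      using solvable_generate_derived_series[OF FS(2)] unfolding H_def by blast
    have "\<forall>h\<in>H. ord h \<noteq> 0"
      using ord_ne_0_in_solvable_subgroup[OF assms(3)[OF F(1,3)] F(1,2,4) H(1,2) d] .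
    then have "locally_finite_set H"
      using periodic_solvable_locally_finite[OF H(1) _ d] by simp
    then show "finite (carrier (subgroup_generated G S))"
      using S H(3) unfolding locally_finite_set_def carrier_subgroup_generated
      by (simp add: Int_absorb1)
  qed
qed

end
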